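(* In the common-ownership game below, there is no ownership structure $\mathbf K$ and no equilibrium $(\mathbf A^*,\mathbf q^* )$ such that $\mathbf A^*\mathbf q^*=\boldsymbol\beta$ and $\mathbf q^*=\boldsymbol\gamma$.
   Context: Model: integers $n\ge2$, $m\ge2$; $\alpha>0$, $\boldsymbol\beta\in\mathbb R^m$ with $\|\boldsymbol\beta\|_2=1$, $\boldsymbol\gamma\in\mathbb R^n$ with all $\gamma_i>0$. Firm $i$ chooses a unit vector $\mathbf a_i\in\mathbb R^m$ and $q_i\ge0$; $\mathbf A=[\mathbf a_1,\dots,\mathbf a_n]$. Standalone profit: $\Pi_i=\alpha q_i\mathbf a_i^\top(\boldsymbol\beta-\sum_{j\ne i}q_j\mathbf a_j)-(1+\alpha)q_i^2+\gamma_iq_i$. An ownership structure is an $n\times n$ matrix $\mathbf K=[\kappa_{ij}]$ with nonnegative entries, $\kappa_{ii}=1$, and $(\mathbf K+\mathbf K^\top)/2$ positive semidefinite. Firm $i$ maximizes $\tilde\Pi_i=\Pi_i+\sum_{j\ne i}\kappa_{ij}\Pi_j$; an equilibrium is a profile $(\mathbf A^*,\mathbf q^* )$ in which each $(\mathbf a_i^*,q_i^* )$ maximizes $\tilde\Pi_i$ over unit $\mathbf a_i$, $q_i\ge0$ given the others' choices. *)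

theory Defs
  imports "HOL-Analysis.Analysis"
begin

text \<open>Firms are indexed by the finite type 'n (n = CARD('n)), the space of
  characteristics by the finite type 'm (m = CARD('m)).  A strategy profile
  is (a, q) where a i :: real^'m is column i of the m x n matrix A and q i is
  the quantity of firm i.\<close>

definition mat_of_cols :: "('n::finite \<Rightarrow> real^'m::finite) \<Rightarrow> real^'n^'m" where
  "mat_of_cols a = (\<chi> k j. a j $ k)"

definition profit ::
  "real \<Rightarrow> real^'m::finite \<Rightarrow> real^'n::finite \<Rightarrow> ('n \<Rightarrow> real^'m) \<Rightarrow> real^'n \<Rightarrow> 'n \<Rightarrow> real" where
  "profit \<alpha> \<beta> \<gamma> a q i =
     \<alpha> * q$i * (a i \<bullet> (\<beta> - (\<Sum>j\<in>UNIV - {i}. q$j *\<^sub>R a j)))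
     - (1 + \<alpha>) * (q$i)^2 + \<gamma>$i * q$i"

definition objective ::
  "real \<Rightarrow> real^'m::finite \<Rightarrow> real^'n::finite \<Rightarrow> real^'n^'n \<Rightarrow> ('n \<Rightarrow> real^'m) \<Rightarrow> real^'n \<Rightarrow> 'n \<Rightarrow> real" where
  "objective \<alpha> \<beta> \<gamma> K a q i =
     profit \<alpha> \<beta> \<gamma> a q i + (\<Sum>j\<in>UNIV - {i}. K$i$j * profit \<alpha> \<beta> \<gamma> a q j)"

definition psd :: "real^'n^'n \<Rightarrow> bool" where
  "psd M \<longleftrightarrow> (\<forall>x. 0 \<le> x \<bullet> (M *v x))"

definition ownership_structure :: "real^'n::finite^'n \<Rightarrow> bool" where
  "ownership_structure K \<longleftrightarrow>
     (\<forall>i j. 0 \<le> K$i$j) \<and> (\<forall>i. K$i$i = 1) \<and>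
     psd ((1/2) *\<^sub>R (K + transpose K))"

definition equilibrium ::
  "real \<Rightarrow> real^'m::finite \<Rightarrow> real^'n::finite \<Rightarrow> real^'n^'n \<Rightarrow> ('n \<Rightarrow> real^'m) \<Rightarrow> real^'n \<Rightarrow> bool" where
  "equilibrium \<alpha> \<beta> \<gamma> K a q \<longleftrightarrow>
     (\<forall>i. norm (a i) = 1 \<and> 0 \<le> q$i \<and>
        (\<forall>b t. norm b = 1 \<longrightarrow> 0 \<le> t \<longrightarrow>
           objective \<alpha> \<beta> \<gamma> K (a(i := b)) (\<chi> j. if j = i then t else q$j) i
             \<le> objective \<alpha> \<beta> \<gamma> K a q i))"

end

theory Submission
  imports Defs
begin

text \<open>At a profile with \<open>A q = \<beta>\<close>, the objective of firm \<open>i\<close> after a unilateral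
  deviation to \<open>(b, t)\<close> is \<open>t (\<alpha> b \<bullet> w\<^sub>i + \<gamma>\<^sub>i) - (1 + \<alpha>) t\<^sup>2\<close> plus a constant, where
  \<open>w\<^sub>i = q\<^sub>i a\<^sub>i - \<Sum>\<^sub>j\<^sub>\<noteq>\<^sub>i \<kappa>\<^sub>i\<^sub>j q\<^sub>j a\<^sub>j\<close>. Optimality of \<open>t = q\<^sub>i\<close> and of the unit vector
  \<open>b = a\<^sub>i\<close> forces \<open>\<Sum>\<^sub>j \<kappa>\<^sub>i\<^sub>j q\<^sub>j a\<^sub>j = ((\<gamma>\<^sub>i - 2 q\<^sub>i) / \<alpha>) a\<^sub>i\<close>. For \<open>q = \<gamma>\<close> this says that
  every coordinate vector \<open>(\<gamma>\<^sub>j a\<^sub>j\<^sub>k)\<^sub>j\<close> is an eigenvector of \<open>K\<close> for the eigenvalue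
  \<open>-1/\<alpha>\<close>, which positive semidefiniteness of \<open>(K + K\<^sup>T)/2\<close> excludes; hence all \<open>a\<^sub>i\<close>
  vanish, contradicting \<open>\<parallel>a\<^sub>i\<parallel> = 1\<close>.\<close>

lemma quadratic_argmax_nonneg:
  fixes c g p :: real
  assumes "c > 0" "g > 0"
    and max: "\<And>t. t \<ge> 0 \<Longrightarrow> t * p - c * t\<^sup>2 \<le> g * p - c * g\<^sup>2"
  shows "p = 2 * c * g"
proof (cases "p < 0")
  case True
  have "g * p - c * g\<^sup>2 < 0"
    using True assms by (smt (verit) mult_pos_neg zero_less_power mult_pos_pos)
  with max[of 0] show ?thesis by simp
next
  case False
  define t where "t = p / (2 * c)"
  have vertex: "s * p - c * s\<^sup>2 = p\<^sup>2 / (4 * c) - c * (s - t)\<^sup>2" for s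
    using \<open>c > 0\<close> by (simp add: t_def field_simps power2_eq_square)
  have "c * (g - t)\<^sup>2 \<le> 0"
    using max[of t] False \<open>c > 0\<close> unfolding vertex by (simp add: t_def)
  hence "g = t" using \<open>c > 0\<close> by (simp add: mult_le_0_iff)
  thus ?thesis using \<open>c > 0\<close> by (simp add: t_def)
qed

lemma unit_maximizer_inner_parallel:
  fixes a w :: "'a::real_inner"
  assumes "norm a = 1" and max: "\<And>b. norm b = 1 \<Longrightarrow> b \<bullet> w \<le> a \<bullet> w"
  shows "w = (a \<bullet> w) *\<^sub>R a"
proof (cases "w = 0")
  case False
  have "norm w = (w /\<^sub>R norm w) \<bullet> w"
    using False by (simp add: dot_square_norm power2_eq_square)
  also have "\<dots> \<le> a \<bullet> w" using False by (intro max) simp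
  finally have "a \<bullet> w = norm a * norm w"
    using norm_cauchy_schwarz[of a w] \<open>norm a = 1\<close> by simp
  thus ?thesis using norm_cauchy_schwarz_eq[of a w] \<open>norm a = 1\<close> by simp
qed simp

lemma profit_altdef:
  "profit \<alpha> \<beta> \<gamma> a q i =
     \<alpha> * q$i * (a i \<bullet> (\<beta> - (\<Sum>k\<in>UNIV. q$k *\<^sub>R a k) + q$i *\<^sub>R a i))
     - (1 + \<alpha>) * (q$i)\<^sup>2 + \<gamma>$i * q$i"
  unfolding profit_def by (simp add: sum_diff1 algebra_simps)

lemma sum_deviation:
  fixes a :: "'n::finite \<Rightarrow> real^'m::finite"
  shows "(\<Sum>k\<in>UNIV. (\<chi> j. if j = i then t else q$j)$k *\<^sub>R (a(i := b)) k) =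
     (\<Sum>k\<in>UNIV. q$k *\<^sub>R a k) - q$i *\<^sub>R a i + t *\<^sub>R b"
proof -
  have "(\<Sum>k\<in>UNIV. (\<chi> j. if j = i then t else q$j)$k *\<^sub>R (a(i := b)) k) =
      t *\<^sub>R b + (\<Sum>k\<in>UNIV - {i}. q$k *\<^sub>R a k)"
    by (subst sum.remove[of UNIV i]) (auto intro!: sum.cong)
  thus ?thesis by (simp add: sum_diff1)
qed

lemma objective_deviation:
  fixes a :: "'n::finite \<Rightarrow> real^'m::finite"
  assumes "(\<Sum>j\<in>UNIV. q$j *\<^sub>R a j) = \<beta>"
  shows "\<exists>C. \<forall>b t. objective \<alpha> \<beta> \<gamma> K (a(i := b)) (\<chi> j. if j = i then t else q$j) i =
    t * (\<alpha> * (b \<bullet> (q$i *\<^sub>R a i - (\<Sum>j\<in>UNIV - {i}. (K$i$j * q$j) *\<^sub>R a j))) + \<gamma>$i)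
    - (1 + \<alpha>) * t\<^sup>2 + C"
proof (intro exI allI)
  fix b t
  let ?q = "\<chi> j. if j = i then t else q$j"
  define P where "P j = \<alpha> * q$j * (a j \<bullet> (q$i *\<^sub>R a i + q$j *\<^sub>R a j)) - (1 + \<alpha>) * (q$j)\<^sup>2 + \<gamma>$j * q$j"
    for j
  have residual: "\<beta> - (\<Sum>k\<in>UNIV. ?q$k *\<^sub>R (a(i := b)) k) = q$i *\<^sub>R a i - t *\<^sub>R b"
    unfolding sum_deviation assms by simp
  have own: "profit \<alpha> \<beta> \<gamma> (a(i := b)) ?q i =
      t * (\<alpha> * (b \<bullet> (q$i *\<^sub>R a i)) + \<gamma>$i) - (1 + \<alpha>) * t\<^sup>2"
    unfolding profit_altdef residual by (simp add: algebra_simps)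
  have other: "K$i$j * profit \<alpha> \<beta> \<gamma> (a(i := b)) ?q j =
      K$i$j * P j - t * (\<alpha> * (b \<bullet> ((K$i$j * q$j) *\<^sub>R a j)))" if "j \<in> UNIV - {i}" for j
    using that unfolding profit_altdef residual P_def
    by (simp add: inner_add_right inner_diff_right inner_commute algebra_simps)
  have others: "(\<Sum>j\<in>UNIV - {i}. K$i$j * profit \<alpha> \<beta> \<gamma> (a(i := b)) ?q j) =
      (\<Sum>j\<in>UNIV - {i}. K$i$j * P j)
      - t * (\<alpha> * (b \<bullet> (\<Sum>j\<in>UNIV - {i}. (K$i$j * q$j) *\<^sub>R a j)))"
    using sum.cong[OF refl other, of "UNIV - {i}"]
    by (simp add: sum_subtractf inner_sum_right sum_distrib_left)
  show "objective \<alpha> \<beta> \<gamma> K (a(i := b)) ?q i =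
    t * (\<alpha> * (b \<bullet> (q$i *\<^sub>R a i - (\<Sum>j\<in>UNIV - {i}. (K$i$j * q$j) *\<^sub>R a j))) + \<gamma>$i)
    - (1 + \<alpha>) * t\<^sup>2 + (\<Sum>j\<in>UNIV - {i}. K$i$j * P j)"
    unfolding objective_def own others by (simp add: inner_diff_right algebra_simps)
qed

lemma mat_of_cols_mult_vector: "mat_of_cols a *v q = (\<Sum>j\<in>UNIV. q$j *\<^sub>R a j)"
  by (simp add: vec_eq_iff matrix_vector_mult_def mat_of_cols_def sum_component mult.commute)

lemma equilibrium_weighted_columns:
  fixes a :: "'n::finite \<Rightarrow> real^'m::finite"
  assumes eq: "equilibrium \<alpha> \<beta> \<gamma> K a q" and sum: "(\<Sum>j\<in>UNIV. q$j *\<^sub>R a j) = \<beta>"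
    and "\<alpha> > 0" "q$i > 0" "K$i$i = 1"
  shows "(\<Sum>j\<in>UNIV. (K$i$j * q$j) *\<^sub>R a j) = ((\<gamma>$i - 2 * q$i) / \<alpha>) *\<^sub>R a i"
proof -
  define u where "u = (\<Sum>j\<in>UNIV - {i}. (K$i$j * q$j) *\<^sub>R a j)"
  define w where "w = q$i *\<^sub>R a i - u"
  obtain C where dev: "\<And>b t. objective \<alpha> \<beta> \<gamma> K (a(i := b)) (\<chi> j. if j = i then t else q$j) i =
      t * (\<alpha> * (b \<bullet> w) + \<gamma>$i) - (1 + \<alpha>) * t\<^sup>2 + C"
    using objective_deviation[OF sum, of \<alpha> \<gamma> K i] unfolding u_def w_def by blast
  have "(\<chi> j. if j = i then q$i else q$j) = q" by (simp add: vec_eq_iff)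
  hence current: "objective \<alpha> \<beta> \<gamma> K a q i = q$i * (\<alpha> * (a i \<bullet> w) + \<gamma>$i) - (1 + \<alpha>) * (q$i)\<^sup>2 + C"
    using dev[of "a i" "q$i"] by simp
  have unit: "norm (a i) = 1" using eq unfolding equilibrium_def by blast
  have best: "t * (\<alpha> * (b \<bullet> w) + \<gamma>$i) - (1 + \<alpha>) * t\<^sup>2
      \<le> q$i * (\<alpha> * (a i \<bullet> w) + \<gamma>$i) - (1 + \<alpha>) * (q$i)\<^sup>2" if "norm b = 1" "t \<ge> 0" for b t
  proof -
    have "objective \<alpha> \<beta> \<gamma> K (a(i := b)) (\<chi> j. if j = i then t else q$j) i \<le> objective \<alpha> \<beta> \<gamma> K a q i"
      using eq that unfolding equilibrium_def by blast
    thus ?thesis unfolding dev current by simp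
  qed
  have quantity: "\<alpha> * (a i \<bullet> w) + \<gamma>$i = 2 * (1 + \<alpha>) * q$i"
    using \<open>\<alpha> > 0\<close> \<open>q$i > 0\<close> best[OF unit] by (intro quadratic_argmax_nonneg) auto
  have "b \<bullet> w \<le> a i \<bullet> w" if "norm b = 1" for b
    using best[OF that, of "q$i"] \<open>\<alpha> > 0\<close> \<open>q$i > 0\<close> by (simp add: algebra_simps)
  hence "w = (a i \<bullet> w) *\<^sub>R a i" using unit_maximizer_inner_parallel[OF unit] by blast
  also have "a i \<bullet> w = (2 * (1 + \<alpha>) * q$i - \<gamma>$i) / \<alpha>"
    using quantity \<open>\<alpha> > 0\<close> by (simp add: field_simps)
  finally have "u = (q$i - (2 * (1 + \<alpha>) * q$i - \<gamma>$i) / \<alpha>) *\<^sub>R a i"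
    unfolding w_def by (simp add: algebra_simps)
  moreover have "(\<Sum>j\<in>UNIV. (K$i$j * q$j) *\<^sub>R a j) = q$i *\<^sub>R a i + u"
    unfolding u_def using \<open>K$i$i = 1\<close> by (simp add: sum_diff1)
  ultimately show ?thesis
    using \<open>\<alpha> > 0\<close> by (simp add: scaleR_add_left[symmetric] field_simps)
qed

lemma inner_symmetric_part:
  fixes K :: "real^'n::finite^'n"
  shows "x \<bullet> ((1/2) *\<^sub>R (K + transpose K) *v x) = x \<bullet> (K *v x)"
  by (simp add: scaleR_matrix_vector_assoc[symmetric] matrix_vector_mult_add_rdistrib
      inner_add_right dot_lmul_matrix[symmetric] inner_commute)

lemma psd_symmetric_part_negative_eigenvector:
  fixes K :: "real^'n::finite^'n"
  assumes "psd ((1/2) *\<^sub>R (K + transpose K))" "K *v x = c *\<^sub>R x" "c < 0"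
  shows "x = 0"
proof -
  have "0 \<le> c * (x \<bullet> x)"
    using assms(1,2) inner_symmetric_part[of x K] unfolding psd_def by (metis inner_scaleR_right)
  hence "x \<bullet> x \<le> 0" using \<open>c < 0\<close> by (simp add: zero_le_mult_iff)
  thus ?thesis by (metis inner_eq_zero_iff inner_ge_zero order_antisym)
qed

lemma weighted_columns_eigenvector:
  fixes K :: "real^'n::finite^'n" and a :: "'n \<Rightarrow> real^'m::finite"
  assumes "\<And>i. (\<Sum>j\<in>UNIV. (K$i$j * q$j) *\<^sub>R a j) = (c * q$i) *\<^sub>R a i"
  shows "K *v (\<chi> j. q$j * a j $ k) = c *\<^sub>R (\<chi> j. q$j * a j $ k)"
proof -
  have "(K *v (\<chi> j. q$j * a j $ k))$i = (\<Sum>j\<in>UNIV. (K$i$j * q$j) *\<^sub>R a j) $ k" for i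
    by (simp add: matrix_vector_mult_def sum_component mult.assoc)
  thus ?thesis by (simp add: vec_eq_iff assms)
qed

theorem corollary2:
  fixes \<alpha> :: real and \<beta> :: "real^'m::finite" and \<gamma> :: "real^'n::finite"
  assumes "CARD('n) \<ge> 2" and "CARD('m) \<ge> 2"
    and "\<alpha> > 0" and "norm \<beta> = 1" and "\<forall>i. \<gamma>$i > 0"
  shows "\<not> (\<exists>K a q. ownership_structure K \<and> equilibrium \<alpha> \<beta> \<gamma> K a q \<and>
                  mat_of_cols a *v q = \<beta> \<and> q = \<gamma>)"
proof
  assume "\<exists>K a q. ownership_structure K \<and> equilibrium \<alpha> \<beta> \<gamma> K a q \<and>
                  mat_of_cols a *v q = \<beta> \<and> q = \<gamma>"
  then obtain K a where K: "ownership_structure K" and eq: "equilibrium \<alpha> \<beta> \<gamma> K a \<gamma>"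
    and sum: "(\<Sum>j\<in>UNIV. \<gamma>$j *\<^sub>R a j) = \<beta>"
    unfolding mat_of_cols_mult_vector by blast
  have psd: "psd ((1/2) *\<^sub>R (K + transpose K))" and diag: "K$i$i = 1" for i
    using K unfolding ownership_structure_def by blast+
  have columns: "(\<Sum>j\<in>UNIV. (K$i$j * \<gamma>$j) *\<^sub>R a j) = (- 1 / \<alpha> * \<gamma>$i) *\<^sub>R a i" for i
    using equilibrium_weighted_columns[OF eq sum \<open>\<alpha> > 0\<close> _ diag] assms(5) by simp
  have "(\<chi> j. \<gamma>$j * a j $ k) = 0" for k
    using psd_symmetric_part_negative_eigenvector[OF psd weighted_columns_eigenvector[OF columns]]
      \<open>\<alpha> > 0\<close> by simp
  hence "a i = 0" for i using assms(5) by (simp add: vec_eq_iff) (metis less_irrefl)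
  thus False using eq unfolding equilibrium_def by (metis norm_zero zero_neq_one)
qed

end
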